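(* Let $d,n_S\ge 1$, $\sigma>0$, $r>0$, and let $X_S\in\mathbb{R}^{n_S\times d}$ be a fixed matrix such that $\hat\Sigma_S:=X_S^\top X_S/n_S$ is invertible. Observations are $\mathbf{y}_S=X_S\boldsymbol{\beta}^*+\mathbf{z}$ with $\mathbf{z}\sim\mathcal{N}(0,\sigma^2 I_{n_S})$ and unknown $\boldsymbol{\beta}^*\in\mathcal{B}:=\{\boldsymbol{\beta}\in\mathbb{R}^d:\|\boldsymbol{\beta}\|_2\le r\}$. Let $\Sigma_T\in\mathbb{R}^{d\times d}$ be positive definite, and suppose there is an orthogonal matrix $U$ and vectors $\mathbf{t},\mathbf{s}\in(0,\infty)^d$ with $\Sigma_T=U\operatorname{diag}(\mathbf{t})U^\top$ and $\hat\Sigma_S=U\operatorname{diag}(\mathbf{s})U^\top$. Define the minimax linear risk $$R_L(\mathcal{B}):=\min_{A\in\mathbb{R}^{d\times n_S}}\ \max_{\boldsymbol{\beta}^*\in\mathcal{B}}\ \mathbb{E}_{\mathbf{z}}\big\|\Sigma_T^{1/2}(A\mathbf{y}_S-\boldsymbol{\beta}^* )\big\|_2^2 .$$ Let $\lambda=\lambda(r)>0$ be determined by $\frac{\sigma^2}{n_S}\sum_{i=1}^d \frac{1}{s_i}\big(\sqrt{t_i}/\lambda-1\big)_+=r^2$. Then $$R_L(\mathcal{B})=\sum_{i=1}^d\frac{\sigma^2}{n_S}\frac{t_i}{s_i}\Big(1-\frac{\lambda}{\sqrt{t_i}}\Big)_+ ,$$ and this value is attained by the linear estimator $$\hat{\boldsymbol{\beta}}_{\mathrm{MM}}=\Sigma_T^{-1/2}U\big(I-\operatorname{diag}(\lambda/\sqrt{\mathbf{t}})\big)_+U^\top\Sigma_T^{1/2}\,\hat{\boldsymbol{\beta}}_{\mathrm{SS}},\qquad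 \hat{\boldsymbol{\beta}}_{\mathrm{SS}}:=\frac{1}{n_S}\hat\Sigma_S^{-1}X_S^\top\mathbf{y}_S,$$ where $\operatorname{diag}(\lambda/\sqrt{\mathbf{t}})$ is the diagonal matrix with entries $\lambda/\sqrt{t_i}$ and $(\cdot)_+$ is applied entrywise to the diagonal.
   Context: $(x)_+=\max(x,0)$. An estimator is called linear if it has the form $\mathbf{y}_S\mapsto A\mathbf{y}_S$ for a matrix $A$ that may depend on $X_S$, $n_S$, $\Sigma_T$ but not on $\mathbf{y}_S$. The expectation is over the noise $\mathbf{z}$ only; $X_S$ is treated as fixed. *)

theory Defs
  imports "HOL-Analysis.Analysis" "HOL-Probability.Probability"
begin

definition mdiag :: "real ^'d \<Rightarrow> real ^'d ^'d" where
  "mdiag v = (\<chi> i j. if i = j then v $ i else 0)"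

definition pos_def :: "real ^'d ^'d \<Rightarrow> bool" where
  "pos_def S \<longleftrightarrow> transpose S = S \<and> (\<forall>x. x \<noteq> 0 \<longrightarrow> x \<bullet> (S *v x) > 0)"

definition pos_semidef :: "real ^'d ^'d \<Rightarrow> bool" where
  "pos_semidef S \<longleftrightarrow> transpose S = S \<and> (\<forall>x. x \<bullet> (S *v x) \<ge> 0)"

definition msqrt :: "real ^'d ^'d \<Rightarrow> real ^'d ^'d" where
  "msqrt S = (THE B. pos_semidef B \<and> B ** B = S)"

definition gauss_noise :: "real \<Rightarrow> (real ^'n) measure" where
  "gauss_noise \<sigma> = density lborel (\<lambda>z. ennreal (\<Prod>i\<in>UNIV. normal_density 0 \<sigma> (z $ i)))"

definition lin_risk ::
  "real \<Rightarrow> real ^'d ^'n \<Rightarrow> real ^'n ^'d \<Rightarrow> real ^'d ^'d \<Rightarrow> real ^'d \<Rightarrow> real" where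
  "lin_risk \<sigma> X A ST \<beta> =
     (\<integral>z. (norm (msqrt ST *v (A *v (X *v \<beta> + z) - \<beta>)))\<^sup>2 \<partial>gauss_noise \<sigma>)"

definition minimax_lin_risk ::
  "real \<Rightarrow> real ^'d ^'n \<Rightarrow> real ^'d ^'d \<Rightarrow> real \<Rightarrow> real" where
  "minimax_lin_risk \<sigma> X ST r =
     (INF A :: real ^'n ^'d. SUP \<beta> \<in> cball 0 r. lin_risk \<sigma> X A ST \<beta>)"

end

theory Submission
  imports Defs
begin

(* In the common eigenbasis U of Sigma_T and hat Sigma_S the problem decouples. The risk of
   y |-> A y is the squared bias ||Sigma_T^(1/2) (A X_S - I) beta||^2 plus the variance
   sigma^2 ||Sigma_T^(1/2) A||_F^2. With G = U^T A X_S U, the j-th eigen-coordinate contributes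
   t_j (G_jj - 1)^2 to the bias at beta = u_j (the j-th column of U) and, by Cauchy-Schwarz,
   at least k_j t_j G_jj^2 to the variance, where k_j = sigma^2 / (n s_j).

   Lower bound: average the risk over the points r u_j with weights tau_j / r^2, where
   tau_j = k_j (sqrt t_j / lam - 1)_+ are the coordinate variances of the least favourable prior
   (they sum to r^2 by the choice of lam). Coordinate j then contributes at least
   t_j (tau_j (g - 1)^2 + k_j g^2) >= t_j tau_j k_j / (tau_j + k_j) = k_j t_j (1 - lam / sqrt t_j)_+.

   Upper bound: the estimator acts diagonally, U^T A_MM X_S U = diag ((1 - lam / sqrt t)_+), so
   its bias is at most lam ||beta|| <= lam r, and lam^2 r^2 plus its variance is exactly the
   claimed value. *)

section \<open>Moments of the Gaussian noise\<close>

lemma integral_lborel_prod: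
  fixes f :: "'a::euclidean_space \<Rightarrow> real \<Rightarrow> real"
  assumes int: "\<And>b. b \<in> Basis \<Longrightarrow> integrable lborel (f b)"
  shows "integrable lborel (\<lambda>x::'a. \<Prod>b\<in>Basis. f b (x \<bullet> b))"
    and "(\<integral>x. (\<Prod>b\<in>Basis. f b (x \<bullet> b)) \<partial>(lborel::'a measure)) = (\<Prod>b\<in>Basis. integral\<^sup>L lborel (f b))"
proof -
  interpret product_sigma_finite "\<lambda>_. lborel" by standard
  have [measurable]: "\<And>b. b \<in> Basis \<Longrightarrow> f b \<in> borel_measurable borel"
    using int by (simp add: borel_measurable_integrable)
  have meas: "(\<lambda>x::'a. \<Prod>b\<in>Basis. f b (x \<bullet> b)) \<in> borel_measurable borel"
    by measurable
  have T: "(\<lambda>f. \<Sum>b\<in>Basis. f b *\<^sub>R b) \<in> measurable (\<Pi>\<^sub>M b\<in>Basis. (lborel::real measure)) (borel::'a measure)"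
    by measurable
  have coords: "(\<Prod>b\<in>Basis. f b ((\<Sum>c\<in>Basis. x c *\<^sub>R c) \<bullet> b)) = (\<Prod>b\<in>Basis. f b (x b))" for x
    by (intro prod.cong refl) (simp add: inner_sum_left inner_Basis if_distrib sum.delta cong: if_cong)
  show "integrable lborel (\<lambda>x::'a. \<Prod>b\<in>Basis. f b (x \<bullet> b))"
    by (subst lborel_eq, subst integrable_distr_eq[OF T meas], unfold coords)
      (rule product_integrable_prod, auto intro: int)
  show "(\<integral>x. (\<Prod>b\<in>Basis. f b (x \<bullet> b)) \<partial>(lborel::'a measure)) = (\<Prod>b\<in>Basis. integral\<^sup>L lborel (f b))"
    by (subst lborel_eq, subst integral_distr[OF T meas], unfold coords)
      (rule product_integral_prod, auto intro: int)
qed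

lemma has_bochner_integral_lborel_vec_prod:
  fixes h :: "'n::finite \<Rightarrow> real \<Rightarrow> real"
  assumes "\<And>i. integrable lborel (h i)"
  shows "has_bochner_integral (lborel :: (real^'n) measure) (\<lambda>z. \<Prod>i\<in>UNIV. h i (z $ i))
           (\<Prod>i\<in>UNIV. integral\<^sup>L lborel (h i))"
proof -
  define f where "f b = h (SOME i. b = axis i (1::real))" for b :: "real^'n"
  have f_axis: "f (axis i 1) = h i" for i
    unfolding f_def by (rule arg_cong[where f=h]) (rule some_equality, auto simp: axis_eq_axis)
  have inj: "inj (\<lambda>i::'n. axis i (1::real))"
    by (auto simp: inj_def axis_eq_axis)
  have Basis: "(Basis :: (real^'n) set) = range (\<lambda>i. axis i 1)"
    by (auto simp: Basis_vec_def)
  have "b \<in> Basis \<Longrightarrow> integrable lborel (f b)" for b :: "real^'n"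
    using assms f_axis by (auto simp: Basis)
  from integral_lborel_prod[of f, OF this] show ?thesis
    by (simp add: has_bochner_integral_iff Basis prod.reindex[OF inj] f_axis inner_axis)
qed

lemma has_bochner_integral_gauss_noise_monomial:
  fixes e :: "'n::finite \<Rightarrow> nat"
  assumes "\<sigma> > 0"
  shows "has_bochner_integral (gauss_noise \<sigma>) (\<lambda>z::real^'n. \<Prod>i\<in>UNIV. (z $ i) ^ e i)
           (\<Prod>i\<in>UNIV. \<integral>x. normal_density 0 \<sigma> x * x ^ e i \<partial>lborel)"
  unfolding gauss_noise_def
proof (rule has_bochner_integral_density)
  show "(\<lambda>z::real^'n. \<Prod>i\<in>UNIV. normal_density 0 \<sigma> (z $ i)) \<in> borel_measurable lborel"
    unfolding normal_density_def by measurable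
  show "AE z in lborel. 0 \<le> (\<Prod>i\<in>UNIV. normal_density 0 \<sigma> ((z::real^'n) $ i))"
    by (simp add: prod_nonneg)
  have "has_bochner_integral lborel (\<lambda>z::real^'n. \<Prod>i\<in>UNIV. normal_density 0 \<sigma> (z $ i) * (z $ i) ^ e i)
     (\<Prod>i\<in>UNIV. \<integral>x. normal_density 0 \<sigma> x * x ^ e i \<partial>lborel)"
    by (rule has_bochner_integral_lborel_vec_prod) (use integrable_normal_moment[OF assms, where \<mu>=0] in simp)
  then show "has_bochner_integral lborel
      (\<lambda>z. (\<Prod>i\<in>UNIV. normal_density 0 \<sigma> (z $ i)) *\<^sub>R (\<Prod>i\<in>UNIV. z $ i ^ e i))
      (\<Prod>i\<in>UNIV. \<integral>x. normal_density 0 \<sigma> x * x ^ e i \<partial>lborel)"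
    by (simp add: prod.distrib)
qed simp

lemma integral_normal_density_moments:
  assumes "\<sigma> > 0"
  shows "(\<integral>x. normal_density 0 \<sigma> x \<partial>lborel) = 1"
    and "(\<integral>x. normal_density 0 \<sigma> x * x \<partial>lborel) = 0"
    and "(\<integral>x. normal_density 0 \<sigma> x * x\<^sup>2 \<partial>lborel) = \<sigma>\<^sup>2"
  using integral_normal_moment_even[OF assms, of 0 0] integral_normal_moment_odd[OF assms, of 0 0]
    integral_normal_moment_even[OF assms, of 0 1]
  by auto

lemma prod_power_of_bool: "(\<Prod>i\<in>UNIV. (z $ i) ^ of_bool (i = j)) = (z $ j :: 'a::comm_monoid_mult)"
proof -
  have "(\<Prod>i\<in>UNIV. (z $ i) ^ of_bool (i = j)) = (\<Prod>i\<in>UNIV. if i = j then z $ j else 1)"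
    by (rule prod.cong) auto
  then show ?thesis by simp
qed

lemma has_bochner_integral_gauss_noise_one:
  assumes "\<sigma> > 0"
  shows "has_bochner_integral (gauss_noise \<sigma>) (\<lambda>z::real^'n::finite. 1::real) 1"
  using has_bochner_integral_gauss_noise_monomial[OF assms, of "\<lambda>_::'n. 0"] by (simp add: integral_normal_density_moments[OF assms])

lemma has_bochner_integral_gauss_noise_component:
  assumes "\<sigma> > 0"
  shows "has_bochner_integral (gauss_noise \<sigma>) (\<lambda>z::real^'n::finite. z $ j) 0"
proof -
  have "(\<Prod>i\<in>UNIV. \<integral>x. normal_density 0 \<sigma> x * x ^ of_bool (i = j) \<partial>lborel) = 0"
    by (rule prod_zero) (use integral_normal_density_moments[OF assms] in \<open>auto intro!: bexI[of _ j]\<close>)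
  with has_bochner_integral_gauss_noise_monomial[OF assms, of "\<lambda>i. of_bool (i = j)"] show ?thesis
    by (simp only: prod_power_of_bool)
qed

lemma has_bochner_integral_gauss_noise_component_mult:
  assumes "\<sigma> > 0"
  shows "has_bochner_integral (gauss_noise \<sigma>) (\<lambda>z::real^'n::finite. z $ j * z $ k)
           (if j = k then \<sigma>\<^sup>2 else 0)"
proof -
  define e :: "'n \<Rightarrow> nat" where "e i = of_bool (i = j) + of_bool (i = k)" for i :: 'n
  have "(\<Prod>i\<in>UNIV. (z $ i) ^ e i) = z $ j * z $ k" for z :: "real^'n"
    by (simp add: e_def power_add prod.distrib prod_power_of_bool)
  moreover have "(\<Prod>i\<in>UNIV. \<integral>x. normal_density 0 \<sigma> x * x ^ e i \<partial>lborel) = (if j = k then \<sigma>\<^sup>2 else 0)"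
  proof (cases "j = k")
    case True
    then have "e i = (if i = j then 2 else 0)" for i
      by (simp add: e_def)
    then have "(\<integral>x. normal_density 0 \<sigma> x * x ^ e i \<partial>lborel) = (if i = j then \<sigma>\<^sup>2 else 1)" for i
      by (simp add: integral_normal_density_moments[OF assms])
    with True show ?thesis by simp
  next
    case False
    then have "(\<integral>x. normal_density 0 \<sigma> x * x ^ e j \<partial>lborel) = 0"
      by (simp add: e_def integral_normal_density_moments[OF assms])
    with False show ?thesis by (auto simp: prod_zero_iff)
  qed
  ultimately show ?thesis
    using has_bochner_integral_gauss_noise_monomial[OF assms, of e] by (simp only:)
qed

definition frobenius_sq :: "real^'m^'k \<Rightarrow> real" where
  "frobenius_sq B = (\<Sum>i\<in>UNIV. \<Sum>j\<in>UNIV. (B $ i $ j)\<^sup>2)"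

lemma integral_gauss_noise_norm_sq:
  fixes v :: "real^'m::finite" and B :: "real^'n::finite^'m"
  assumes "\<sigma> > 0"
  shows "(\<integral>z. (norm (v + B *v z))\<^sup>2 \<partial>gauss_noise \<sigma>) = (norm v)\<^sup>2 + \<sigma>\<^sup>2 * frobenius_sq B"
proof -
  let ?q = "\<lambda>i z. (v$i)\<^sup>2 * 1 + (2 * v$i) * (\<Sum>j\<in>UNIV. B$i$j * z$j)
      + (\<Sum>j\<in>UNIV. \<Sum>k\<in>UNIV. (B$i$j * B$i$k) * (z$j * z$k))"
  have expand: "(norm (v + B *v z))\<^sup>2 = (\<Sum>i\<in>UNIV. ?q i z)" for z
    unfolding power2_norm_eq_inner inner_vec_def
    by (intro sum.cong refl)
       (simp add: matrix_vector_mult_def power2_eq_square algebra_simps sum_distrib_left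
          sum_distrib_right flip: sum.distrib)
  have "has_bochner_integral (gauss_noise \<sigma>) (\<lambda>z. \<Sum>i\<in>UNIV. ?q i z)
      (\<Sum>i\<in>UNIV. (v$i)\<^sup>2 * 1 + (2 * v$i) * (\<Sum>j\<in>UNIV. B$i$j * 0)
      + (\<Sum>j\<in>UNIV. \<Sum>k\<in>UNIV. (B$i$j * B$i$k) * (if j = k then \<sigma>\<^sup>2 else 0)))"
    by (intro has_bochner_integral_sum has_bochner_integral_add has_bochner_integral_mult_right
          has_bochner_integral_gauss_noise_one has_bochner_integral_gauss_noise_component has_bochner_integral_gauss_noise_component_mult assms)
  also have "(\<Sum>i\<in>UNIV. (v$i)\<^sup>2 * 1 + (2 * v$i) * (\<Sum>j\<in>UNIV. B$i$j * 0)
      + (\<Sum>j\<in>UNIV. \<Sum>k\<in>UNIV. (B$i$j * B$i$k) * (if j = k then \<sigma>\<^sup>2 else 0)))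
     = (norm v)\<^sup>2 + \<sigma>\<^sup>2 * frobenius_sq B"
    unfolding power2_norm_eq_inner inner_vec_def frobenius_sq_def
    by (simp add: if_distrib sum.distrib sum_distrib_left power2_eq_square algebra_simps cong: if_cong)
  finally show ?thesis
    by (simp add: expand has_bochner_integral_integral_eq)
qed

lemma lin_risk_bias_variance:
  assumes "\<sigma> > 0"
  shows "lin_risk \<sigma> X A S \<beta> =
           (norm (msqrt S *v ((A ** X - mat 1) *v \<beta>)))\<^sup>2 + \<sigma>\<^sup>2 * frobenius_sq (msqrt S ** A)"
proof -
  have "msqrt S *v (A *v (X *v \<beta> + z) - \<beta>) = msqrt S *v ((A ** X - mat 1) *v \<beta>) + (msqrt S ** A) *v z" for z
    by (simp add: matrix_vector_right_distrib matrix_vector_mult_diff_distrib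
        matrix_vector_mult_diff_rdistrib matrix_vector_mul_assoc algebra_simps)
  then show ?thesis
    unfolding lin_risk_def by (simp add: integral_gauss_noise_norm_sq[OF assms])
qed

section \<open>Diagonal and spectral matrices\<close>

lemma mdiag_mult_left: "mdiag a ** M = (\<chi> i j. a$i * M$i$j)"
  unfolding mdiag_def matrix_matrix_mult_def vec_eq_iff
  by (simp add: if_distrib[where f="\<lambda>c. c * _"] sum.delta' cong: if_cong)

lemma mdiag_mult_right: "M ** mdiag a = (\<chi> i j. M$i$j * a$j)"
  unfolding mdiag_def matrix_matrix_mult_def vec_eq_iff
  by (simp add: if_distrib[where f="\<lambda>c. _ * c"] sum.delta cong: if_cong)

lemma mdiag_mult: "mdiag a ** mdiag b = mdiag (\<chi> i. a$i * b$i)"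
  by (simp add: mdiag_mult_left) (simp add: mdiag_def vec_eq_iff)

lemma mdiag_1: "mdiag (\<chi> i. 1) = mat 1"
  by (simp add: mdiag_def mat_def vec_eq_iff)

lemma transpose_mdiag: "transpose (mdiag a) = mdiag a"
  by (simp add: mdiag_def transpose_def vec_eq_iff)

lemma mdiag_mult_vector: "mdiag a *v x = (\<chi> i. a$i * x$i)"
  unfolding mdiag_def matrix_vector_mult_def vec_eq_iff
  by (simp add: if_distrib[where f="\<lambda>c. c * _"] sum.delta' cong: if_cong)

lemma power2_norm_vec: "(norm x)\<^sup>2 = (\<Sum>i\<in>UNIV. (x$i)\<^sup>2)"
  by (simp add: norm_vec_def L2_set_def sum_nonneg)

lemma norm_mdiag_mult_vector_le:
  assumes "\<And>i. \<bar>a$i\<bar> \<le> c"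
  shows "norm (mdiag a *v x) \<le> c * norm x"
proof (rule power2_le_imp_le)
  have "(a$i * x$i)\<^sup>2 \<le> c\<^sup>2 * (x$i)\<^sup>2" for i
    using power_mono[OF assms[of i], of 2] by (simp add: power_mult_distrib mult_right_mono)
  then show "(norm (mdiag a *v x))\<^sup>2 \<le> (c * norm x)\<^sup>2"
    by (simp add: power2_norm_vec mdiag_mult_vector power_mult_distrib sum_distrib_left sum_mono)
  show "0 \<le> c * norm x"
    using order_trans[OF abs_ge_zero assms] by simp
qed

lemma mdiag_commute_fun:
  assumes "M ** mdiag a = mdiag a ** M"
  shows "M ** mdiag (\<chi> i. f (a$i)) = mdiag (\<chi> i. f (a$i)) ** M"
proof -
  have "M$i$j * f (a$j) = f (a$i) * M$i$j" for i j
  proof (cases "M$i$j = 0")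
    case False
    moreover have "M$i$j * a$j = a$i * M$i$j"
      using assms by (simp add: mdiag_mult_left mdiag_mult_right vec_eq_iff)
    ultimately show ?thesis by simp
  qed simp
  then show ?thesis
    by (simp add: mdiag_mult_left mdiag_mult_right vec_eq_iff)
qed

lemma norm_orthogonal_matrix_vector_mult:
  assumes "orthogonal_matrix (U::real^'n^'n)" shows "norm (U *v x) = norm x"
  using assms orthogonal_transformation_matrix[of "(*v) U"] orthogonal_transformation_norm
  by (simp add: matrix_of_matrix_vector_mul)

lemma frobenius_sq_columns: "frobenius_sq B = (\<Sum>j\<in>UNIV. (norm (B *v axis j 1))\<^sup>2)"
  unfolding frobenius_sq_def
  by (subst sum.swap) (simp add: power2_norm_vec matrix_vector_mult_basis column_def)

lemma frobenius_sq_orthogonal_mult: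
  "orthogonal_matrix U \<Longrightarrow> frobenius_sq (U ** B) = frobenius_sq B"
  unfolding frobenius_sq_columns by (simp add: norm_orthogonal_matrix_vector_mult flip: matrix_vector_mul_assoc)

lemma frobenius_sq_scaleR: "frobenius_sq (c *\<^sub>R B) = c\<^sup>2 * frobenius_sq B"
  by (simp add: frobenius_sq_def power_mult_distrib sum_distrib_left)

lemma frobenius_sq_mdiag_mult:
  "frobenius_sq (mdiag w ** N) = (\<Sum>i\<in>UNIV. (w$i)\<^sup>2 * (\<Sum>k\<in>UNIV. (N$i$k)\<^sup>2))"
  unfolding frobenius_sq_def mdiag_mult_left by (simp add: power_mult_distrib sum_distrib_left)

lemma matrix_inv_unique:
  fixes A B :: "real^'n^'n"
  assumes "A ** B = mat 1" "B ** A = mat 1"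
  shows "matrix_inv A = B"
proof -
  have inv: "A ** matrix_inv A = mat 1 \<and> matrix_inv A ** A = mat 1"
    unfolding matrix_inv_def by (rule someI[of _ B]) (use assms in simp)
  have "matrix_inv A = matrix_inv A ** (A ** B)" using assms by simp
  also have "\<dots> = B" using inv by (simp add: matrix_mul_assoc)
  finally show ?thesis .
qed

lemma pos_semidef_commuting_sqrt_unique:
  fixes B C :: "real^'n^'n"
  assumes "pos_semidef B" "pos_def C" "B ** B = C ** C" "B ** C = C ** B"
  shows "B = C"
proof (rule matrix_eq[THEN iffD2], rule allI)
  fix x
  define y where "y = B *v x - C *v x"
  have "B *v y + C *v y = (B ** B - B ** C + C ** B - C ** C) *v x"
    by (simp add: y_def matrix_vector_mult_diff_distrib matrix_vector_mult_diff_rdistrib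
        matrix_vector_right_distrib matrix_vector_mul_assoc algebra_simps)
  also have "\<dots> = 0" by (simp add: assms(3,4))
  finally have "y \<bullet> (B *v y) + y \<bullet> (C *v y) = 0"
    by (simp flip: inner_add_right)
  moreover have "y \<bullet> (B *v y) \<ge> 0" using assms(1) by (simp add: pos_semidef_def)
  ultimately have "y = 0" using assms(2) unfolding pos_def_def by force
  then show "B *v x = C *v x" by (simp add: y_def)
qed

lemma pos_def_imp_pos_semidef: "pos_def S \<Longrightarrow> pos_semidef S"
  unfolding pos_def_def pos_semidef_def by (metis inner_zero_left order_refl less_imp_le)

definition spectral_matrix :: "real^'n^'n \<Rightarrow> real^'n \<Rightarrow> real^'n^'n" where
  "spectral_matrix U a = U ** mdiag a ** transpose U"

lemma transpose_spectral_matrix: "transpose (spectral_matrix U a) = spectral_matrix U a"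
  by (simp add: spectral_matrix_def matrix_transpose_mul transpose_mdiag matrix_mul_assoc)

context
  fixes U :: "real^'n^'n"
  assumes U: "orthogonal_matrix U"
begin

(* Matrix products are normalised to right-nested form (flip: matrix_mul_assoc), where these
   cancellations apply. The simp rule transpose_matrix_vector would rewrite transpose U *v x to
   x v* U and hide them, so it is deleted where they are needed. *)
lemma orthogonal_matrix_mult_cancel:
  shows "transpose U ** U = mat 1" and "U ** transpose U = mat 1"
    and "transpose U ** (U ** M) = M" and "U ** (transpose U ** M) = M"
  using U by (simp_all add: orthogonal_matrix_def matrix_mul_assoc)

lemma orthogonal_matrix_vector_cancel:
  shows "U *v (transpose U *v x) = x" and "transpose U *v (U *v x) = x"
  by (simp_all add: matrix_vector_mul_assoc orthogonal_matrix_mult_cancel del: transpose_matrix_vector)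

lemma spectral_matrix_mult_orthogonal:
  shows "spectral_matrix U a ** U = U ** mdiag a"
    and "transpose U ** spectral_matrix U a = mdiag a ** transpose U"
  by (simp_all add: spectral_matrix_def orthogonal_matrix_mult_cancel flip: matrix_mul_assoc)

lemma spectral_matrix_mult:
  "spectral_matrix U a ** spectral_matrix U b = spectral_matrix U (\<chi> i. a$i * b$i)"
  unfolding spectral_matrix_def
  by (simp add: orthogonal_matrix_mult_cancel flip: matrix_mul_assoc)
    (simp add: matrix_mul_assoc flip: mdiag_mult)

lemma spectral_matrix_1: "spectral_matrix U (\<chi> i. 1) = mat 1"
  by (simp add: spectral_matrix_def mdiag_1 orthogonal_matrix_mult_cancel)

lemma matrix_inv_spectral_matrix:
  assumes "\<And>i. a$i \<noteq> 0"
  shows "matrix_inv (spectral_matrix U a) = spectral_matrix U (\<chi> i. inverse (a$i))"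
  by (rule matrix_inv_unique)
    (simp_all add: spectral_matrix_mult assms flip: spectral_matrix_1)

lemma inner_spectral_matrix:
  "x \<bullet> (spectral_matrix U a *v x) = (\<Sum>i\<in>UNIV. a$i * ((transpose U *v x)$i)\<^sup>2)"
proof -
  have "x \<bullet> (spectral_matrix U a *v x) = x \<bullet> (U *v (mdiag a *v (transpose U *v x)))"
    by (simp add: spectral_matrix_def flip: matrix_vector_mul_assoc)
  also have "\<dots> = (transpose U *v x) \<bullet> (mdiag a *v (transpose U *v x))"
    by (simp add: transpose_matrix_vector flip: dot_lmul_matrix)
  finally show ?thesis
    by (simp add: inner_vec_def mdiag_mult_vector power2_eq_square mult_ac)
qed

lemma pos_def_spectral_matrix:
  assumes "\<And>i. a$i > 0"
  shows "pos_def (spectral_matrix U a)"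
  unfolding pos_def_def
proof (intro conjI allI impI)
  show "transpose (spectral_matrix U a) = spectral_matrix U a"
    by (rule transpose_spectral_matrix)
  fix x :: "real^'n"
  assume "x \<noteq> 0"
  then have "transpose U *v x \<noteq> 0"
    using U norm_orthogonal_matrix_vector_mult[of "transpose U" x] by auto
  then obtain i where "(transpose U *v x) $ i \<noteq> 0" by (auto simp: vec_eq_iff)
  then show "x \<bullet> (spectral_matrix U a *v x) > 0"
    unfolding inner_spectral_matrix
    by (intro sum_pos2[where i=i]) (auto simp: assms less_imp_le)
qed

lemma spectral_matrix_commute:
  assumes "M ** spectral_matrix U a = spectral_matrix U a ** M"
  shows "M ** spectral_matrix U (\<chi> i. f (a$i)) = spectral_matrix U (\<chi> i. f (a$i)) ** M"
proof -
  define M' where "M' = transpose U ** M ** U"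
  note conjugation = M'_def spectral_matrix_def orthogonal_matrix_mult_cancel
  have "M' ** mdiag a = transpose U ** (M ** spectral_matrix U a) ** U"
    by (simp add: conjugation flip: matrix_mul_assoc)
  also have "\<dots> = mdiag a ** M'"
    by (simp add: assms) (simp add: conjugation flip: matrix_mul_assoc)
  finally have "M' ** mdiag (\<chi> i. f (a$i)) = mdiag (\<chi> i. f (a$i)) ** M'"
    by (rule mdiag_commute_fun)
  moreover have "M ** spectral_matrix U b = U ** (M' ** mdiag b) ** transpose U"
    and "spectral_matrix U b ** M = U ** (mdiag b ** M') ** transpose U" for b
    by (simp_all add: conjugation flip: matrix_mul_assoc)
  ultimately show ?thesis by simp
qed

lemma msqrt_spectral_matrix:
  assumes "\<And>i. t$i > 0"
  shows "msqrt (spectral_matrix U t) = spectral_matrix U (\<chi> i. sqrt (t$i))"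
  unfolding msqrt_def
proof (rule the_equality)
  let ?C = "spectral_matrix U (\<chi> i. sqrt (t$i))"
  have C: "pos_def ?C"
    by (rule pos_def_spectral_matrix) (simp add: assms)
  have CC: "?C ** ?C = spectral_matrix U t"
    by (simp add: spectral_matrix_mult assms less_imp_le)
  then show "pos_semidef ?C \<and> ?C ** ?C = spectral_matrix U t"
    using C by (simp add: pos_def_imp_pos_semidef)
  fix B assume B: "pos_semidef B \<and> B ** B = spectral_matrix U t"
  then have "B ** spectral_matrix U t = spectral_matrix U t ** B"
    by (metis matrix_mul_assoc)
  then have "B ** ?C = ?C ** B"
    by (rule spectral_matrix_commute)
  then show "B = ?C"
    using B C CC pos_semidef_commuting_sqrt_unique by metis
qed

lemma lin_risk_spectral_matrix:
  fixes X :: "real^'n^'m" and A :: "real^'m^'n"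
  assumes "\<sigma> > 0" "\<And>i. t$i > 0"
  defines "D \<equiv> mdiag (\<chi> i. sqrt (t$i))"
  shows "lin_risk \<sigma> X A (spectral_matrix U t) \<beta> =
           (norm (D *v ((transpose U ** A ** (X ** U) - mat 1) *v (transpose U *v \<beta>))))\<^sup>2
           + \<sigma>\<^sup>2 * frobenius_sq (D ** (transpose U ** A))"
proof -
  have "transpose U *v ((A ** X - mat 1) *v \<beta>) = (transpose U ** A ** (X ** U) - mat 1) *v (transpose U *v \<beta>)"
    by (simp add: matrix_vector_mult_diff_rdistrib matrix_vector_mult_diff_distrib
        orthogonal_matrix_vector_cancel del: transpose_matrix_vector flip: matrix_vector_mul_assoc)
  moreover have "spectral_matrix U (\<chi> i. sqrt (t$i)) *v v = U *v (D *v (transpose U *v v))" for v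
    by (simp add: D_def spectral_matrix_def flip: matrix_vector_mul_assoc)
  moreover have "spectral_matrix U (\<chi> i. sqrt (t$i)) ** A = U ** (D ** (transpose U ** A))"
    by (simp add: D_def spectral_matrix_def matrix_mul_assoc)
  ultimately show ?thesis
    using U by (simp add: lin_risk_bias_variance assms msqrt_spectral_matrix frobenius_sq_orthogonal_mult
        norm_orthogonal_matrix_vector_mult)
qed

end

section \<open>Scalar inequalities\<close>

(* tau k / (tau + k) is the Bayes risk of a N(0, tau) mean observed with noise variance k,
   which no linear rule y |-> g y beats. *)
lemma quadratic_min_le:
  fixes \<tau> k g :: real
  assumes "0 \<le> \<tau>" "0 < k"
  shows "\<tau> * k / (\<tau> + k) \<le> \<tau> * (g - 1)\<^sup>2 + k * g\<^sup>2"
proof -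
  have "(\<tau> + k) * (\<tau> * (g - 1)\<^sup>2 + k * g\<^sup>2) - \<tau> * k = (\<tau> * (g - 1) + k * g)\<^sup>2"
    by (simp add: power2_eq_square algebra_simps)
  then have "\<tau> * k \<le> (\<tau> + k) * (\<tau> * (g - 1)\<^sup>2 + k * g\<^sup>2)"
    by (metis diff_ge_0_iff_ge zero_le_power2)
  with assms show ?thesis
    by (simp add: divide_le_eq mult.commute)
qed

lemma shrinkage_bayes_risk:
  fixes a lam k :: real
  assumes "0 < a" "0 < lam" "0 < k"
  shows "k * max 0 (a / lam - 1) * k / (k * max 0 (a / lam - 1) + k) = k * max 0 (1 - lam / a)"
proof (cases "a \<le> lam")
  case True
  with assms have "a / lam - 1 \<le> 0" "1 - lam / a \<le> 0"
    by (simp_all add: divide_le_eq le_divide_eq)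
  then show ?thesis by simp
next
  case False
  with assms have "a / lam - 1 > 0" "1 - lam / a > 0"
    by (simp_all add: field_simps)
  with assms show ?thesis
    by (simp add: field_simps)
qed

lemma shrinkage_bias_le:
  fixes a lam :: real
  assumes "0 < a" "0 < lam"
  shows "\<bar>a * (max 0 (1 - lam / a) - 1)\<bar> \<le> lam"
proof (cases "a \<le> lam")
  case True
  with assms have "1 - lam / a \<le> 0"
    by (simp add: le_divide_eq)
  with True assms show ?thesis by simp
next
  case False
  with assms have "1 - lam / a > 0"
    by (simp add: field_simps)
  with assms show ?thesis by (simp add: field_simps)
qed

lemma shrinkage_risk_eq:
  fixes a lam :: real
  assumes "0 < a" "0 < lam"
  shows "lam\<^sup>2 * max 0 (a / lam - 1) + a\<^sup>2 * (max 0 (1 - lam / a))\<^sup>2 = a\<^sup>2 * max 0 (1 - lam / a)"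
proof (cases "a \<le> lam")
  case True
  with assms have "a / lam - 1 \<le> 0" "1 - lam / a \<le> 0"
    by (simp_all add: divide_le_eq le_divide_eq)
  then show ?thesis by simp
next
  case False
  with assms have "a / lam - 1 > 0" "1 - lam / a > 0"
    by (simp_all add: field_simps)
  with assms show ?thesis
    by (simp add: field_simps power2_eq_square)
qed

lemma SUP_ge_convex_combination:
  fixes f :: "'a \<Rightarrow> real"
  assumes "finite I" "\<And>i. i \<in> I \<Longrightarrow> 0 \<le> w i" "sum w I = 1"
    and "\<And>i. i \<in> I \<Longrightarrow> x i \<in> S" "bdd_above (f ` S)"
  shows "(\<Sum>i\<in>I. w i * f (x i)) \<le> (SUP y\<in>S. f y)"
proof -
  have "(\<Sum>i\<in>I. w i * f (x i)) \<le> (\<Sum>i\<in>I. w i * (SUP y\<in>S. f y))"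
    by (intro sum_mono mult_left_mono cSUP_upper assms)
  also have "\<dots> = (SUP y\<in>S. f y)"
    using assms(3) by (simp flip: sum_distrib_right)
  finally show ?thesis .
qed

section \<open>The minimax problem in the eigenbasis\<close>

locale linear_minimax =
  fixes \<sigma> r lam :: real and X :: "real^'d^'n" and U :: "real^'d^'d" and t s :: "real^'d"
  assumes sigma_pos: "\<sigma> > 0" and r_pos: "r > 0" and lam_pos: "lam > 0"
    and U: "orthogonal_matrix U"
    and t_pos: "\<And>i. t$i > 0" and s_pos: "\<And>i. s$i > 0"
    and design: "(1 / real CARD('n)) *\<^sub>R (transpose X ** X) = spectral_matrix U s"
    and lam_eq: "(\<sigma>\<^sup>2 / real CARD('n)) * (\<Sum>i\<in>UNIV. (1 / s$i) * max 0 (sqrt (t$i) / lam - 1)) = r\<^sup>2"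
begin

definition XU :: "real^'d^'n" where "XU = X ** U"

definition noise_var :: "'d \<Rightarrow> real" where
  "noise_var i = \<sigma>\<^sup>2 / (real CARD('n) * s$i)"

definition prior_var :: "'d \<Rightarrow> real" where
  "prior_var i = noise_var i * max 0 (sqrt (t$i) / lam - 1)"

definition minimax_value :: real where
  "minimax_value = (\<Sum>i\<in>UNIV. (\<sigma>\<^sup>2 / real CARD('n)) * (t$i / s$i) * max 0 (1 - lam / sqrt (t$i)))"

lemma noise_var_pos: "noise_var i > 0"
  using sigma_pos s_pos[of i] by (simp add: noise_var_def)

lemma prior_var_nonneg: "prior_var i \<ge> 0"
  using noise_var_pos[of i] by (simp add: prior_var_def)

lemma sum_prior_var: "(\<Sum>i\<in>UNIV. prior_var i) = r\<^sup>2"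
  unfolding lam_eq[symmetric] prior_var_def noise_var_def sum_distrib_left
  by (intro sum.cong) auto

lemma gram_XU: "transpose XU ** XU = real CARD('n) *\<^sub>R mdiag s"
proof -
  have XX: "transpose X ** X = real CARD('n) *\<^sub>R spectral_matrix U s"
    using arg_cong[OF design, of "\<lambda>B. real CARD('n) *\<^sub>R B"] by simp
  have "transpose XU ** XU = transpose U ** (transpose X ** X) ** U"
    by (simp add: XU_def matrix_transpose_mul matrix_mul_assoc)
  also have "\<dots> = real CARD('n) *\<^sub>R (transpose U ** spectral_matrix U s ** U)"
    by (simp add: XX matrix_scalar_ac flip: scalar_matrix_assoc)
  also have "transpose U ** spectral_matrix U s ** U = mdiag s"
    by (simp add: spectral_matrix_def orthogonal_matrix_mult_cancel[OF U] flip: matrix_mul_assoc)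
  finally show ?thesis .
qed

lemma column_norm_XU: "(\<Sum>k\<in>UNIV. (XU$k$j)\<^sup>2) = real CARD('n) * s$j"
proof -
  have "(transpose XU ** XU)$j$j = real CARD('n) * s$j"
    by (simp add: gram_XU mdiag_def)
  then show ?thesis
    by (simp add: matrix_matrix_mult_def transpose_def power2_eq_square)
qed

lemma minimax_value_eq_bayes_risk:
  "minimax_value = (\<Sum>i\<in>UNIV. t$i * (prior_var i * noise_var i / (prior_var i + noise_var i)))"
  unfolding minimax_value_def prior_var_def
proof (intro sum.cong refl)
  fix i
  show "\<sigma>\<^sup>2 / real CARD('n) * (t$i / s$i) * max 0 (1 - lam / sqrt (t$i)) =
    t$i * (noise_var i * max 0 (sqrt (t$i) / lam - 1) * noise_var i
      / (noise_var i * max 0 (sqrt (t$i) / lam - 1) + noise_var i))"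
    using shrinkage_bayes_risk[of "sqrt (t$i)" lam "noise_var i"] t_pos lam_pos noise_var_pos
    by (simp add: noise_var_def)
qed

lemma rotated_lower_bound:
  fixes B :: "real^'n^'d"
  defines "D \<equiv> mdiag (\<chi> i. sqrt (t$i))"
  shows "minimax_value \<le> (\<Sum>j\<in>UNIV. prior_var j * (norm (D *v ((B ** XU - mat 1) *v axis j 1)))\<^sup>2)
           + \<sigma>\<^sup>2 * frobenius_sq (D ** B)"
proof -
  define G where "G = B ** XU"
  have bias: "t$j * (G$j$j - 1)\<^sup>2 \<le> (norm (D *v ((G - mat 1) *v axis j 1)))\<^sup>2" for j
  proof -
    have "(D *v ((G - mat 1) *v axis j 1)) $ j = sqrt (t$j) * (G$j$j - 1)"
      by (simp add: D_def mdiag_mult_vector matrix_vector_mult_diff_rdistrib matrix_vector_mult_basis column_def mat_def)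
    then have "\<bar>sqrt (t$j) * (G$j$j - 1)\<bar> \<le> norm (D *v ((G - mat 1) *v axis j 1))"
      by (metis component_le_norm_cart)
    from power_mono[OF this abs_ge_zero, of 2] show ?thesis
      using t_pos[of j] by (simp add: power_mult_distrib)
  qed
  have variance: "frobenius_sq (D ** B) = (\<Sum>j\<in>UNIV. t$j * (\<Sum>k\<in>UNIV. (B$j$k)\<^sup>2))"
    by (simp add: D_def frobenius_sq_mdiag_mult t_pos less_imp_le)
  have cauchy_schwarz: "(G$j$j)\<^sup>2 \<le> (\<Sum>k\<in>UNIV. (B$j$k)\<^sup>2) * (real CARD('n) * s$j)" for j
  proof -
    have "G$j$j = B$j \<bullet> column j XU"
      by (simp add: G_def matrix_matrix_mult_def inner_vec_def column_def)
    then show ?thesis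
      using Cauchy_Schwarz_ineq[of "B$j" "column j XU"] column_norm_XU[of j]
      by (simp add: inner_vec_def column_def power2_eq_square)
  qed
  have coordinate: "t$j * (prior_var j * noise_var j / (prior_var j + noise_var j))
      \<le> prior_var j * (t$j * (G$j$j - 1)\<^sup>2) + \<sigma>\<^sup>2 * (t$j * (\<Sum>k\<in>UNIV. (B$j$k)\<^sup>2))" for j
  proof -
    have "noise_var j * (G$j$j)\<^sup>2 \<le> \<sigma>\<^sup>2 * (\<Sum>k\<in>UNIV. (B$j$k)\<^sup>2)"
      using mult_left_mono[OF cauchy_schwarz[of j], of "noise_var j"] noise_var_pos[of j] s_pos[of j]
      by (simp add: noise_var_def)
    then have "prior_var j * noise_var j / (prior_var j + noise_var j)
        \<le> prior_var j * (G$j$j - 1)\<^sup>2 + \<sigma>\<^sup>2 * (\<Sum>k\<in>UNIV. (B$j$k)\<^sup>2)"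
      using quadratic_min_le[OF prior_var_nonneg noise_var_pos, of j j "G$j$j"] by linarith
    from mult_left_mono[OF this, of "t$j"] show ?thesis
      using t_pos[of j] by (simp add: algebra_simps)
  qed
  have "minimax_value \<le> (\<Sum>j\<in>UNIV. prior_var j * (t$j * (G$j$j - 1)\<^sup>2)
      + \<sigma>\<^sup>2 * (t$j * (\<Sum>k\<in>UNIV. (B$j$k)\<^sup>2)))"
    unfolding minimax_value_eq_bayes_risk by (intro sum_mono coordinate)
  also have "\<dots> = (\<Sum>j\<in>UNIV. prior_var j * (t$j * (G$j$j - 1)\<^sup>2)) + \<sigma>\<^sup>2 * frobenius_sq (D ** B)"
    by (simp add: variance sum.distrib sum_distrib_left)
  also have "\<dots> \<le> (\<Sum>j\<in>UNIV. prior_var j * (norm (D *v ((G - mat 1) *v axis j 1)))\<^sup>2)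
      + \<sigma>\<^sup>2 * frobenius_sq (D ** B)"
    by (intro add_right_mono sum_mono mult_left_mono bias prior_var_nonneg)
  finally show ?thesis unfolding G_def .
qed

(* The weights give the points r u_j the second moments of the least favourable prior, and the
   risk is a quadratic function of beta. *)
lemma minimax_lower_bound:
  "minimax_value \<le> (SUP \<beta>\<in>cball 0 r. lin_risk \<sigma> X A (spectral_matrix U t) \<beta>)"
proof -
  define D where "D = mdiag (\<chi> i. sqrt (t$i))"
  define B where "B = transpose U ** A"
  define M where "M = D ** (B ** XU - mat 1) ** transpose U"
  define V where "V = \<sigma>\<^sup>2 * frobenius_sq (D ** B)"
  define u where "u j = r *\<^sub>R (U *v axis j 1)" for j
  have risk: "lin_risk \<sigma> X A (spectral_matrix U t) = (\<lambda>\<beta>. (norm (M *v \<beta>))\<^sup>2 + V)"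
    by (simp add: fun_eq_iff lin_risk_spectral_matrix[OF U sigma_pos t_pos] D_def B_def M_def V_def XU_def
        flip: matrix_vector_mul_assoc)
  have "bdd_above ((\<lambda>\<beta>. (norm (M *v \<beta>))\<^sup>2 + V) ` cball 0 r)"
    by (intro bounded_imp_bdd_above compact_imp_bounded compact_continuous_image continuous_intros
        compact_cball)
  moreover have "u j \<in> cball 0 r" for j
    using r_pos by (simp add: u_def norm_orthogonal_matrix_vector_mult[OF U])
  moreover have "(\<Sum>j\<in>UNIV. prior_var j / r\<^sup>2) = 1"
    using r_pos by (simp add: sum_prior_var flip: sum_divide_distrib)
  ultimately have "(\<Sum>j\<in>UNIV. prior_var j / r\<^sup>2 * ((norm (M *v u j))\<^sup>2 + V))
      \<le> (SUP \<beta>\<in>cball 0 r. (norm (M *v \<beta>))\<^sup>2 + V)"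
    by (intro SUP_ge_convex_combination) (simp_all add: prior_var_nonneg)
  moreover have "M *v u j = r *\<^sub>R (D *v ((B ** XU - mat 1) *v axis j 1))" for j
    by (simp add: M_def u_def orthogonal_matrix_vector_cancel[OF U] matrix_vector_mult_scaleR
        del: transpose_matrix_vector flip: matrix_vector_mul_assoc)
  then have "prior_var j / r\<^sup>2 * ((norm (M *v u j))\<^sup>2 + V)
      = prior_var j * (norm (D *v ((B ** XU - mat 1) *v axis j 1)))\<^sup>2 + prior_var j / r\<^sup>2 * V" for j
    using r_pos by (simp add: field_simps power_mult_distrib)
  then have "(\<Sum>j\<in>UNIV. prior_var j / r\<^sup>2 * ((norm (M *v u j))\<^sup>2 + V))
      = (\<Sum>j\<in>UNIV. prior_var j * (norm (D *v ((B ** XU - mat 1) *v axis j 1)))\<^sup>2) + V"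
    using r_pos by (simp add: sum.distrib sum_prior_var flip: sum_divide_distrib sum_distrib_right)
  ultimately show ?thesis
    using rotated_lower_bound[of B] unfolding risk D_def V_def by linarith
qed

lemma t_nonzero: "t$i \<noteq> 0" and s_nonzero: "s$i \<noteq> 0"
  using t_pos[of i] s_pos[of i] by simp_all

definition shrink :: "real^'d" where
  "shrink = (\<chi> i. max 0 (1 - lam / sqrt (t$i)))"

lemma shrink_nth: "shrink$i = max 0 (1 - lam / sqrt (t$i))"
  by (simp add: shrink_def)

definition A_SS :: "real^'n^'d" where
  "A_SS = (1 / real CARD('n)) *\<^sub>R
     (matrix_inv ((1 / real CARD('n)) *\<^sub>R (transpose X ** X)) ** transpose X)"

definition A_MM :: "real^'n^'d" where
  "A_MM = matrix_inv (msqrt (spectral_matrix U t)) ** U ** mdiag shrink ** transpose U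
     ** msqrt (spectral_matrix U t) ** A_SS"

lemma A_MM_eq: "A_MM = (1 / real CARD('n)) *\<^sub>R (spectral_matrix U (\<chi> i. shrink$i / s$i) ** transpose X)"
proof -
  have "A_MM = spectral_matrix U (\<chi> i. inverse (sqrt (t$i))) ** spectral_matrix U shrink
      ** spectral_matrix U (\<chi> i. sqrt (t$i)) ** A_SS"
    by (simp add: A_MM_def msqrt_spectral_matrix[OF U t_pos] matrix_inv_spectral_matrix[OF U]
        t_nonzero spectral_matrix_def[of U shrink] matrix_mul_assoc)
  also have "spectral_matrix U (\<chi> i. inverse (sqrt (t$i))) ** spectral_matrix U shrink
      ** spectral_matrix U (\<chi> i. sqrt (t$i)) = spectral_matrix U shrink"
  proof -
    have "(\<chi> i. inverse (sqrt (t$i)) * shrink$i * sqrt (t$i)) = shrink"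
      by (simp add: vec_eq_iff t_nonzero)
    then show ?thesis by (simp add: spectral_matrix_mult[OF U])
  qed
  also have "spectral_matrix U shrink ** A_SS
      = (1 / real CARD('n)) *\<^sub>R (spectral_matrix U (\<chi> i. shrink$i / s$i) ** transpose X)"
    unfolding A_SS_def design
    by (simp add: matrix_inv_spectral_matrix[OF U] s_nonzero
        matrix_scalar_ac matrix_mul_assoc spectral_matrix_mult[OF U] divide_inverse
        flip: scalar_matrix_assoc)
  finally show ?thesis .
qed

lemma A_MM_rotated:
  "transpose U ** A_MM = (1 / real CARD('n)) *\<^sub>R (mdiag (\<chi> i. shrink$i / s$i) ** transpose XU)"
  by (simp add: A_MM_eq XU_def matrix_transpose_mul matrix_scalar_ac matrix_mul_assoc
      spectral_matrix_mult_orthogonal[OF U] flip: scalar_matrix_assoc)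

lemma A_MM_rotated_mult_XU: "transpose U ** A_MM ** XU = mdiag shrink"
proof -
  have "transpose U ** A_MM ** XU = mdiag (\<chi> i. shrink$i / s$i) ** mdiag s"
    by (simp add: A_MM_rotated gram_XU matrix_scalar_ac flip: matrix_mul_assoc scalar_matrix_assoc)
  also have "\<dots> = mdiag shrink"
    by (simp add: mdiag_mult s_nonzero)
  finally show ?thesis .
qed

lemma minimax_value_eq_shrinkage_risk:
  "minimax_value = lam\<^sup>2 * r\<^sup>2 + \<sigma>\<^sup>2 * (\<Sum>i\<in>UNIV. t$i * (shrink$i)\<^sup>2 / (real CARD('n) * s$i))"
proof -
  have "(\<sigma>\<^sup>2 / real CARD('n)) * (t$i / s$i) * shrink$i
      = lam\<^sup>2 * ((\<sigma>\<^sup>2 / real CARD('n)) * ((1 / s$i) * max 0 (sqrt (t$i) / lam - 1)))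
        + \<sigma>\<^sup>2 * (t$i * (shrink$i)\<^sup>2 / (real CARD('n) * s$i))" for i
  proof -
    define m where "m = max 0 (sqrt (t$i) / lam - 1)"
    have "lam\<^sup>2 * m + t$i * (shrink$i)\<^sup>2 = t$i * shrink$i"
      using shrinkage_risk_eq[of "sqrt (t$i)" lam] t_pos[of i] lam_pos by (simp add: m_def shrink_def)
    then have "(\<sigma>\<^sup>2 / real CARD('n)) * (t$i / s$i) * shrink$i
        = \<sigma>\<^sup>2 / (real CARD('n) * s$i) * (lam\<^sup>2 * m + t$i * (shrink$i)\<^sup>2)"
      by simp
    then show ?thesis by (simp add: m_def algebra_simps)
  qed
  then show ?thesis
    unfolding minimax_value_def lam_eq[symmetric] shrink_nth[symmetric]
    by (simp add: sum.distrib sum_distrib_left)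
qed

lemma A_MM_bias_le:
  "norm (mdiag (\<chi> i. sqrt (t$i)) *v ((mdiag shrink - mat 1) *v \<gamma>)) \<le> lam * norm \<gamma>"
proof -
  have "mdiag (\<chi> i. sqrt (t$i)) *v ((mdiag shrink - mat 1) *v \<gamma>)
      = mdiag (\<chi> i. sqrt (t$i) * (shrink$i - 1)) *v \<gamma>"
    by (simp add: mdiag_mult_vector matrix_vector_mult_diff_rdistrib vec_eq_iff algebra_simps)
  also have "norm \<dots> \<le> lam * norm \<gamma>"
    by (rule norm_mdiag_mult_vector_le) (simp add: shrink_def shrinkage_bias_le t_pos lam_pos)
  finally show ?thesis .
qed

lemma A_MM_variance:
  "frobenius_sq (mdiag (\<chi> i. sqrt (t$i)) ** (transpose U ** A_MM))
     = (\<Sum>i\<in>UNIV. t$i * (shrink$i)\<^sup>2 / (real CARD('n) * s$i))"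
proof -
  define w where "w = (\<chi> i. sqrt (t$i) * (shrink$i / s$i))"
  have "mdiag (\<chi> i. sqrt (t$i)) ** (transpose U ** A_MM)
      = (1 / real CARD('n)) *\<^sub>R (mdiag w ** transpose XU)"
    by (simp add: w_def A_MM_rotated matrix_scalar_ac matrix_mul_assoc mdiag_mult
        flip: scalar_matrix_assoc)
  then have "frobenius_sq (mdiag (\<chi> i. sqrt (t$i)) ** (transpose U ** A_MM))
      = (1 / real CARD('n))\<^sup>2 * (\<Sum>i\<in>UNIV. (w$i)\<^sup>2 * (\<Sum>k\<in>UNIV. (transpose XU $ i $ k)\<^sup>2))"
    by (simp only: frobenius_sq_scaleR frobenius_sq_mdiag_mult)
  also have "\<dots> = (1 / real CARD('n))\<^sup>2 * (\<Sum>i\<in>UNIV. (w$i)\<^sup>2 * (real CARD('n) * s$i))"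
    by (simp add: transpose_def column_norm_XU)
  also have "\<dots> = (\<Sum>i\<in>UNIV. t$i * (shrink$i)\<^sup>2 / (real CARD('n) * s$i))"
    unfolding sum_distrib_left
    by (intro sum.cong refl)
      (simp add: w_def t_pos less_imp_le s_nonzero power_mult_distrib power2_eq_square field_simps)
  finally show ?thesis .
qed

lemma minimax_upper_bound:
  assumes "\<beta> \<in> cball 0 r"
  shows "lin_risk \<sigma> X A_MM (spectral_matrix U t) \<beta> \<le> minimax_value"
proof -
  define \<gamma> where "\<gamma> = transpose U *v \<beta>"
  have "norm \<gamma> \<le> r"
    using assms by (simp add: \<gamma>_def norm_orthogonal_matrix_vector_mult orthogonal_matrix_transpose U
        del: transpose_matrix_vector)
  with A_MM_bias_le[of \<gamma>] lam_pos
  have "norm (mdiag (\<chi> i. sqrt (t$i)) *v ((mdiag shrink - mat 1) *v \<gamma>)) \<le> lam * r"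
    by (meson mult_left_mono order_trans less_imp_le)
  then have bias: "(norm (mdiag (\<chi> i. sqrt (t$i)) *v ((mdiag shrink - mat 1) *v \<gamma>)))\<^sup>2 \<le> lam\<^sup>2 * r\<^sup>2"
    by (metis norm_ge_zero power_mono power_mult_distrib)
  have "lin_risk \<sigma> X A_MM (spectral_matrix U t) \<beta>
      = (norm (mdiag (\<chi> i. sqrt (t$i)) *v ((mdiag shrink - mat 1) *v \<gamma>)))\<^sup>2
        + \<sigma>\<^sup>2 * frobenius_sq (mdiag (\<chi> i. sqrt (t$i)) ** (transpose U ** A_MM))"
    unfolding lin_risk_spectral_matrix[OF U sigma_pos t_pos] A_MM_rotated_mult_XU[unfolded XU_def] \<gamma>_def ..
  then show ?thesis
    using bias A_MM_variance minimax_value_eq_shrinkage_risk by simp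
qed

lemma SUP_risk_A_MM: "(SUP \<beta>\<in>cball 0 r. lin_risk \<sigma> X A_MM (spectral_matrix U t) \<beta>) = minimax_value"
proof (rule antisym)
  show "(SUP \<beta>\<in>cball 0 r. lin_risk \<sigma> X A_MM (spectral_matrix U t) \<beta>) \<le> minimax_value"
    using r_pos by (intro cSUP_least minimax_upper_bound) auto
qed (rule minimax_lower_bound)

lemma minimax_lin_risk_eq: "minimax_lin_risk \<sigma> X (spectral_matrix U t) r = minimax_value"
  unfolding minimax_lin_risk_def
proof (rule cInf_eq_minimum)
  show "minimax_value \<in> range (\<lambda>A. SUP \<beta>\<in>cball 0 r. lin_risk \<sigma> X A (spectral_matrix U t) \<beta>)"
    by (rule image_eqI[where x = A_MM]) (simp_all add: SUP_risk_A_MM)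
qed (clarify, rule minimax_lower_bound)

end

theorem theorem1:
  fixes X :: "real ^'d ^'n" and ST U :: "real ^'d ^'d" and t s :: "real ^'d"
    and \<sigma> r lam :: real
  assumes "\<sigma> > 0" and "r > 0"
    and "invertible ((1 / real CARD('n)) *\<^sub>R (transpose X ** X))"
    and "pos_def ST"
    and "orthogonal_matrix U"
    and "\<forall>i. t $ i > 0" and "\<forall>i. s $ i > 0"
    and "ST = U ** mdiag t ** transpose U"
    and "(1 / real CARD('n)) *\<^sub>R (transpose X ** X) = U ** mdiag s ** transpose U"
    and "lam > 0"
    and "(\<sigma>\<^sup>2 / real CARD('n)) * (\<Sum>i\<in>UNIV. (1 / s $ i) * max 0 (sqrt (t $ i) / lam - 1)) = r\<^sup>2"
  shows "minimax_lin_risk \<sigma> X ST r =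
           (\<Sum>i\<in>UNIV. (\<sigma>\<^sup>2 / real CARD('n)) * (t $ i / s $ i) * max 0 (1 - lam / sqrt (t $ i)))
       \<and> (let SS = (1 / real CARD('n)) *\<^sub>R (transpose X ** X);
              A_SS = (1 / real CARD('n)) *\<^sub>R (matrix_inv SS ** transpose X);
              A_MM = matrix_inv (msqrt ST) ** U
                     ** mdiag (\<chi> i. max 0 (1 - lam / sqrt (t $ i)))
                     ** transpose U ** msqrt ST ** A_SS
          in (SUP \<beta> \<in> cball 0 r. lin_risk \<sigma> X A_MM ST \<beta>) =
             (\<Sum>i\<in>UNIV. (\<sigma>\<^sup>2 / real CARD('n)) * (t $ i / s $ i) * max 0 (1 - lam / sqrt (t $ i))))"
proof -
  interpret linear_minimax \<sigma> r lam X U t s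
    by unfold_locales (use assms in \<open>simp_all add: spectral_matrix_def\<close>)
  have "ST = spectral_matrix U t"
    using assms(8) by (simp add: spectral_matrix_def)
  then show ?thesis
    using minimax_lin_risk_eq SUP_risk_A_MM
    unfolding Let_def A_MM_def A_SS_def shrink_def minimax_value_def by simp
qed

end
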